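(* Let $f:[0,\infty)\to(0,\infty)$ be twice continuously differentiable with $(f'(x))^2\le f''(x)f(x)$ for all $x\ge0$, and assume the power series $g(x)=\sum_{n=0}^\infty f(n)x^n$ has positive radius of convergence. Then the reciprocal power series has the form $\frac{1}{g(x)}=\frac{1}{f(0)}\Bigl(1-\sum_{n=1}^\infty b_nx^n\Bigr)$ with $b_n\ge0$ for all $n\ge1$; consequently the kernel $K(z,w)=\sum_{n=0}^\infty f(n)z^n\overline w^n$ is a complete Nevanlinna–Pick kernel.
   Context: A positive definite kernel of the form $K(z,w)=\sum_n a_n(z\overline w)^n$ with $a_0>0$ is a complete Nevanlinna–Pick (CNP) kernel when $1/K(z,w)=\frac{1}{a_0}(1-\sum_{n\ge1}b_n(z\overline w)^n)$ with all $b_n\ge0$ (i.e. $1/K$ has one positive square). *)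

theory Defs
  imports "HOL-Analysis.Analysis" "HOL-Computational_Algebra.Formal_Power_Series"
begin

text \<open>A kernel K(z,w) = sum_n a_n (z conj w)^n with a_0 > 0 is identified with its
  coefficient sequence a. It is a complete Nevanlinna-Pick (CNP) kernel when
  1/K = (1/a_0)(1 - sum_{n>=1} b_n (z conj w)^n) with all b_n >= 0; the reciprocal
  is taken as (formal) power series in the variable z conj w.\<close>

definition cnp_kernel :: "(nat \<Rightarrow> real) \<Rightarrow> bool" where
  "cnp_kernel a \<longleftrightarrow> a 0 > 0 \<and>
     (\<exists>b :: nat \<Rightarrow> real. (\<forall>n\<ge>1. b n \<ge> 0) \<and>
        inverse (Abs_fps a) = fps_const (1 / a 0) * (1 - Abs_fps (\<lambda>n. if n = 0 then 0 else b n)))"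

end

theory Submission
  imports Defs
begin

text \<open>The hypothesis \<open>f'\<^sup>2 \<le> f'' f\<close> says that \<open>(ln f)'' \<ge> 0\<close>, so \<open>f\<close> is log-convex and
  the ratios \<open>a (n + 1) / a n\<close> of \<open>a n = f n\<close> increase. The coefficients \<open>b\<close> of the
  reciprocal series are those of the renewal equation \<open>a n = (\<Sum>k=1..n. b k * a (n - k))\<close>.
  Kaluza's argument shows \<open>b n \<ge> 0\<close> by induction: subtracting \<open>a m\<close> times the equation for
  \<open>m + 1\<close> from \<open>a (m + 1)\<close> times the equation for \<open>m\<close> gives
  \<open>a 0 * a m * b (m + 1) = (\<Sum>k=1..m. b k * (a (m + 1) * a (m - k) - a m * a (m + 1 - k)))\<close>,
  and each summand is nonnegative by the induction hypothesis and the monotonicity of the ratios.\<close>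

lemma log_derivative_mono:
  fixes f f' f'' :: "real \<Rightarrow> real"
  assumes "x \<le> y"
    and pos: "\<And>t. x \<le> t \<Longrightarrow> t \<le> y \<Longrightarrow> f t > 0"
    and d1: "\<And>t. x \<le> t \<Longrightarrow> t \<le> y \<Longrightarrow> (f has_real_derivative f' t) (at t)"
    and d2: "\<And>t. x \<le> t \<Longrightarrow> t \<le> y \<Longrightarrow> (f' has_real_derivative f'' t) (at t)"
    and ineq: "\<And>t. x \<le> t \<Longrightarrow> t \<le> y \<Longrightarrow> (f' t)\<^sup>2 \<le> f'' t * f t"
  shows "f' x / f x \<le> f' y / f y"
proof (rule deriv_nonneg_imp_mono[OF _ _ \<open>x \<le> y\<close>])
  fix t assume t: "t \<in> {x..y}"
  then have "f t \<noteq> 0" using pos by force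
  with t show "((\<lambda>t. f' t / f t) has_real_derivative (f'' t * f t - (f' t)\<^sup>2) / (f t)\<^sup>2) (at t)"
    using DERIV_divide[OF d2 d1] by (simp add: power2_eq_square)
  show "(f'' t * f t - (f' t)\<^sup>2) / (f t)\<^sup>2 \<ge> 0"
    using ineq t by simp
qed

lemma ln_mean_value:
  fixes f f' :: "real \<Rightarrow> real"
  assumes "x < y"
    and pos: "\<And>t. x \<le> t \<Longrightarrow> t \<le> y \<Longrightarrow> f t > 0"
    and cont: "continuous_on {x..y} f"
    and deriv: "\<And>t. x < t \<Longrightarrow> t < y \<Longrightarrow> (f has_real_derivative f' t) (at t)"
  obtains z where "x < z" "z < y" "ln (f y) - ln (f x) = (y - x) * (f' z / f z)"
proof -
  have "continuous_on {x..y} (\<lambda>t. ln (f t))"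
    by (rule continuous_on_ln[OF cont]) (use pos in force)
  moreover have "((\<lambda>t. ln (f t)) has_real_derivative 1 / f t * f' t) (at t)"
    if "x < t" "t < y" for t
    by (rule DERIV_chain2[OF DERIV_ln_divide deriv[OF that]]) (use pos that in force)
  ultimately obtain z where "x < z" "z < y" "ln (f y) - ln (f x) = f' z / f z * (y - x)"
    using mvt[OF \<open>x < y\<close>, of "\<lambda>t. ln (f t)" "\<lambda>t. (*) (1 / f t * f' t)"]
    by (auto simp: has_field_derivative_def)
  then show thesis by (metis that mult.commute)
qed

lemma has_real_derivative_at_of_within_atLeast:
  assumes "(f has_real_derivative D) (at x within {a..})" "a < x"
  shows "(f has_real_derivative D) (at x)"
  using assms at_within_interior[of x "{a..}"] by simp

lemma mono_ratio_of_log_convex: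
  fixes f f' f'' :: "real \<Rightarrow> real"
  assumes pos: "\<And>x. x \<ge> 0 \<Longrightarrow> f x > 0"
    and d1: "\<And>x. x \<ge> 0 \<Longrightarrow> (f has_real_derivative f' x) (at x within {0..})"
    and d2: "\<And>x. x \<ge> 0 \<Longrightarrow> (f' has_real_derivative f'' x) (at x within {0..})"
    and ineq: "\<And>x. x \<ge> 0 \<Longrightarrow> (f' x)\<^sup>2 \<le> f'' x * f x"
  shows "mono (\<lambda>n. f (real (Suc n)) / f (real n))"
proof -
  define q where "q t = f' t / f t" for t
  have d1': "(f has_real_derivative f' x) (at x)" if "x > 0" for x
    using has_real_derivative_at_of_within_atLeast[OF d1 that] that by simp
  have d2': "(f' has_real_derivative f'' x) (at x)" if "x > 0" for x
    using has_real_derivative_at_of_within_atLeast[OF d2 that] that by simp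
  have cont: "continuous_on {0..} f"
    using d1 by (intro DERIV_continuous_on) auto
  have "\<exists>z. real n < z \<and> z < real n + 1 \<and> f (real (Suc n)) / f (real n) = exp (q z)" for n
  proof -
    obtain z where z: "real n < z" "z < real n + 1"
      "ln (f (real n + 1)) - ln (f (real n)) = (real n + 1 - real n) * q z"
      by (rule ln_mean_value[of "real n" "real n + 1" f f'])
        (auto intro: pos d1' continuous_on_subset[OF cont] simp: q_def)
    have "f (real (Suc n)) / f (real n) = exp (ln (f (real n + 1)) - ln (f (real n)))"
      using pos by (simp add: exp_diff add.commute)
    with z show ?thesis by auto
  qed
  then obtain \<xi> where \<xi>: "\<And>n. real n < \<xi> n" "\<And>n. \<xi> n < real n + 1"
    "\<And>n. f (real (Suc n)) / f (real n) = exp (q (\<xi> n))"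
    by metis
  have "q (\<xi> n) \<le> q (\<xi> (Suc n))" for n
  proof -
    have "0 < \<xi> n" using \<xi>(1)[of n] of_nat_0_le_iff[of n] by linarith
    moreover have "\<xi> n \<le> \<xi> (Suc n)" using \<xi>(2)[of n] \<xi>(1)[of "Suc n"] by simp
    ultimately show ?thesis
      unfolding q_def by (intro log_derivative_mono) (auto intro: pos d1' d2' ineq)
  qed
  then show ?thesis
    by (intro incseq_SucI) (simp only: \<xi>(3) exp_le_cancel_iff)
qed

lemma inverse_Abs_fps_renewal_form:
  fixes a :: "nat \<Rightarrow> 'a::field"
  assumes a0: "a 0 \<noteq> 0"
  obtains b where
    "inverse (Abs_fps a) = fps_const (1 / a 0) * (1 - Abs_fps (\<lambda>n. if n = 0 then 0 else b n))"
    "\<And>n. n \<ge> 1 \<Longrightarrow> a n = (\<Sum>k=1..n. b k * a (n - k))"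
proof
  define c where "c n = fps_nth (inverse (Abs_fps a)) n" for n
  define b where "b n = - a 0 * c n" for n
  show "inverse (Abs_fps a) = fps_const (1 / a 0) * (1 - Abs_fps (\<lambda>n. if n = 0 then 0 else b n))"
    by (rule fps_ext) (use a0 in \<open>auto simp: b_def c_def field_simps\<close>)
  fix n :: nat assume "n \<ge> 1"
  have c0: "c 0 = 1 / a 0" unfolding c_def by (simp add: a0 field_simps)
  have "0 = fps_nth (inverse (Abs_fps a) * Abs_fps a) n"
    using \<open>n \<ge> 1\<close> a0 by (simp add: inverse_mult_eq_1)
  also have "\<dots> = c 0 * a n + (\<Sum>k=1..n. c k * a (n - k))"
    by (simp add: fps_mult_nth c_def sum.atLeast_Suc_atMost)
  finally have "0 = a 0 * (c 0 * a n + (\<Sum>k=1..n. c k * a (n - k)))" by simp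
  also have "\<dots> = a n - (\<Sum>k=1..n. b k * a (n - k))"
    using a0 by (simp add: c0 b_def sum_distrib_left sum_negf algebra_simps)
  finally show "a n = (\<Sum>k=1..n. b k * a (n - k))" by simp
qed

lemma renewal_coefficients_nonneg:
  fixes a b :: "nat \<Rightarrow> real"
  assumes apos: "\<And>n. a n > 0"
    and ratio: "mono (\<lambda>n. a (Suc n) / a n)"
    and renewal: "\<And>n. n \<ge> 1 \<Longrightarrow> a n = (\<Sum>k=1..n. b k * a (n - k))"
    and "n \<ge> 1"
  shows "b n \<ge> 0"
  using \<open>n \<ge> 1\<close>
proof (induction n rule: less_induct)
  case (less n)
  show ?case
  proof (cases "n = 1")
    case True
    then have "a 1 = b 1 * a 0" using renewal[of 1] by simp
    then show ?thesis using True apos[of 0] apos[of 1] by (simp add: zero_less_mult_iff)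
  next
    case False
    then obtain m where n: "n = Suc m" and "m \<ge> 1" using less.prems by (cases n) auto
    have "a 0 * a m * b n = a m * a n - a m * (\<Sum>k=1..m. b k * a (n - k))"
      using renewal[of n] by (simp add: n add.commute algebra_simps)
    also have "\<dots> = a n * (\<Sum>k=1..m. b k * a (m - k)) - a m * (\<Sum>k=1..m. b k * a (n - k))"
      using renewal[OF \<open>m \<ge> 1\<close>] by simp
    also have "\<dots> = (\<Sum>k=1..m. b k * (a n * a (m - k) - a m * a (n - k)))"
      by (simp add: sum_distrib_left sum_subtractf[symmetric] algebra_simps)
    also have "\<dots> \<ge> 0"
    proof (rule sum_nonneg)
      fix k assume k: "k \<in> {1..m}"
      have "a (Suc (m - k)) / a (m - k) \<le> a (Suc m) / a m"
        using monoD[OF ratio, of "m - k" m] by simp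
      then have "a (n - k) * a m \<le> a n * a (m - k)"
        using k apos[of m] apos[of "m - k"] by (simp add: n Suc_diff_le divide_le_eq field_simps)
      moreover have "b k \<ge> 0" using less.IH k n by simp
      ultimately show "b k * (a n * a (m - k) - a m * a (n - k)) \<ge> 0"
        by (simp add: mult.commute)
    qed
    finally have "0 \<le> a 0 * a m * b n" .
    moreover have "a 0 * a m > 0" using apos by simp
    ultimately show ?thesis by (simp add: zero_le_mult_iff)
  qed
qed

theorem theorem9p6:
  fixes f f' f'' :: "real \<Rightarrow> real"
  assumes pos: "\<And>x. x \<ge> 0 \<Longrightarrow> f x > 0"
    and d1: "\<And>x. x \<ge> 0 \<Longrightarrow> (f has_real_derivative f' x) (at x within {0..})"
    and d2: "\<And>x. x \<ge> 0 \<Longrightarrow> (f' has_real_derivative f'' x) (at x within {0..})"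
    and cont2: "continuous_on {0..} f''"
    and ineq: "\<And>x. x \<ge> 0 \<Longrightarrow> (f' x)\<^sup>2 \<le> f'' x * f x"
    and rad: "fps_conv_radius (Abs_fps (\<lambda>n. f (real n))) > 0"
  shows "(\<exists>b :: nat \<Rightarrow> real. (\<forall>n\<ge>1. b n \<ge> 0) \<and>
            inverse (Abs_fps (\<lambda>n. f (real n))) =
              fps_const (1 / f 0) * (1 - Abs_fps (\<lambda>n. if n = 0 then 0 else b n)))
         \<and> cnp_kernel (\<lambda>n. f (real n))"
proof -
  let ?a = "\<lambda>n. f (real n)"
  have apos: "?a n > 0" for n using pos by simp
  obtain b where inv: "inverse (Abs_fps ?a) =
      fps_const (1 / ?a 0) * (1 - Abs_fps (\<lambda>n. if n = 0 then 0 else b n))"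
    and renewal: "\<And>n. n \<ge> 1 \<Longrightarrow> ?a n = (\<Sum>k=1..n. b k * ?a (n - k))"
    using inverse_Abs_fps_renewal_form[of ?a] apos[of 0] by auto
  have "\<forall>n\<ge>1. b n \<ge> 0"
    using renewal_coefficients_nonneg[OF apos mono_ratio_of_log_convex[OF pos d1 d2 ineq] renewal]
    by blast
  with inv apos[of 0] show ?thesis unfolding cnp_kernel_def by auto
qed

end
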